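(* Let $N\geq 5$ and let $B$ be the unit ball in $\mathbb{R}^N$. Then for all $u\in C_0^\infty(B)$, \[ \int_B\frac{|\nabla u|^2}{|x|^2-\tfrac{9}{10}|x|^{\frac N2+1}}\,dx\;\geq\;\Big(\frac{N-4}{2}\Big)^2\int_B\frac{u^2}{\big(|x|^2-\tfrac{9}{10}|x|^{\frac N2+1}\big)\big(|x|^2-|x|^{\frac N2}\big)}\,dx \] and \[ \int_B\frac{|\nabla u|^2}{|x|^2}\,dx\;\geq\;\Big(\frac{N-4}{2}\Big)^2\int_B\frac{u^2}{|x|^2\big(|x|^2-|x|^{\frac N2}\big)}\,dx. \] *)

theory Defs
  imports "HOL-Analysis.Analysis"
begin

definition partial_deriv :: "'n::finite \<Rightarrow> (real^'n \<Rightarrow> real) \<Rightarrow> real^'n \<Rightarrow> real" where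
  "partial_deriv i g x = deriv (\<lambda>t. g (x + t *\<^sub>R axis i 1)) 0"

fun iter_partial :: "'n::finite list \<Rightarrow> (real^'n \<Rightarrow> real) \<Rightarrow> real^'n \<Rightarrow> real" where
  "iter_partial [] g = g"
| "iter_partial (i # is) g = partial_deriv i (iter_partial is g)"

text \<open>C-infinity on the whole space: every iterated partial derivative is
  (Frechet) differentiable everywhere (hence all of them exist and are continuous).\<close>
definition smooth :: "(real^'n::finite \<Rightarrow> real) \<Rightarrow> bool" where
  "smooth g \<longleftrightarrow> (\<forall>is. \<forall>x. iter_partial is g differentiable at x)"

text \<open>C_0^infinity(S): smooth functions whose support is compact and contained in S
  (identified with their extension by zero to the whole space).\<close>
definition C0_infty :: "(real^'n::finite) set \<Rightarrow> (real^'n \<Rightarrow> real) set" where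
  "C0_infty S = {g. smooth g \<and> compact (closure {x. g x \<noteq> 0}) \<and> closure {x. g x \<noteq> 0} \<subseteq> S}"

definition grad :: "(real^'n::finite \<Rightarrow> real) \<Rightarrow> real^'n \<Rightarrow> real^'n" where
  "grad g x = (\<chi> i. partial_deriv i g x)"

end

theory Submission
  imports Defs
begin

text \<open>
  Write \<open>r = |x|\<close>,
  \<open>s = (N - 4)/2\<close>, \<open>q(r) = r\<^sup>2 - a r\<^bsup>N/2+1\<^esup> = r\<^sup>2 (1 - E)\<close> with \<open>E = a r\<^bsup>s+1\<^esup>\<close>, and
  \<open>p(r) = r\<^sup>2 - r\<^bsup>N/2\<^esup> = r\<^sup>2 (1 - T)\<close> with \<open>T = r\<^sup>s\<close>.  For every \<open>0 \<le> a < 1\<close> we prove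
  \<open>\<integral>\<^sub>B |\<nabla>u|\<^sup>2 / q \<ge> s\<^sup>2 \<integral>\<^sub>B u\<^sup>2 / (q p)\<close>; the theorem is the case \<open>a = 9/10\<close> together with \<open>a = 0\<close>.

  The proof is the vector field method.  For a radial weight \<open>k\<close> the divergence theorem gives
  \<open>\<integral> u\<^sup>2 (N k + r k') + 2 k u (x \<bullet> \<nabla>u) = 0\<close>, and completing the square,
  \<open>|\<nabla>u|\<^sup>2 / q \<ge> -2 k u (x \<bullet> \<nabla>u) - q r\<^sup>2 k\<^sup>2 u\<^sup>2\<close>, turns this into
  \<open>\<integral> |\<nabla>u|\<^sup>2 / q \<ge> \<integral> u\<^sup>2 (N k + r k' - q r\<^sup>2 k\<^sup>2)\<close>.  The choice
  \<open>k = s / ((1 - E)(1 - T)(r\<^sup>4 + d))\<close> makes the bracket at least \<open>s\<^sup>2 r\<^sup>4 / ((r\<^sup>4 + d) q p)\<close>;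
  the regularisation \<open>d > 0\<close> keeps \<open>k\<close> bounded at the origin and is removed at the end by
  monotone convergence.
\<close>

section \<open>The divergence identity for radial vector fields\<close>

lemma lborel_integral_dilation:
  fixes h :: "'a::euclidean_space \<Rightarrow> real"
  assumes [measurable]: "h \<in> borel_measurable borel" and h: "integrable lborel h" and c: "c > 0"
  shows "integrable lborel (\<lambda>x. h (c *\<^sub>R x))"
    and "integral\<^sup>L lborel h = c ^ DIM('a) * integral\<^sup>L lborel (\<lambda>x. h (c *\<^sub>R x))"
proof -
  let ?M = "density (distr lborel borel (\<lambda>x. 0 + c *\<^sub>R x)) (\<lambda>_. \<bar>c\<bar> ^ DIM('a))"
  have L: "(lborel::'a measure) = ?M"
    using lborel_affine[of c "0::'a"] c by simp
  have "integrable ?M h"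
    using h L by simp
  then have "integrable lborel (\<lambda>x. \<bar>c\<bar> ^ DIM('a) *\<^sub>R h (c *\<^sub>R x))"
    by (subst (asm) integrable_density; simp) (subst (asm) integrable_distr_eq; simp)
  then show "integrable lborel (\<lambda>x. h (c *\<^sub>R x))"
    using c by simp
  have "integral\<^sup>L lborel h = integral\<^sup>L ?M h"
    using L by simp
  also have "\<dots> = integral\<^sup>L lborel (\<lambda>x. \<bar>c\<bar> ^ DIM('a) *\<^sub>R h (c *\<^sub>R x))"
    by (subst integral_density; simp) (subst integral_distr; simp)
  finally show "integral\<^sup>L lborel h = c ^ DIM('a) * integral\<^sup>L lborel (\<lambda>x. h (c *\<^sub>R x))"
    using c by simp
qed

text \<open>This is the divergence theorem for the radial field \<open>x h(x)\<close>, obtained by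
  dominated convergence of the difference quotients.\<close>
lemma integral_dilation_derivative_zero:
  fixes h :: "'a::euclidean_space \<Rightarrow> real" and H :: "'a \<Rightarrow> real \<Rightarrow> real"
  assumes [measurable]: "h \<in> borel_measurable borel" and h: "integrable lborel h"
    and H: "\<And>x l. 1 \<le> l \<Longrightarrow> l \<le> 2 \<Longrightarrow>
              ((\<lambda>l. l ^ DIM('a) * h (l *\<^sub>R x)) has_real_derivative H x l) (at l)"
    and H_bound: "\<And>x l. 1 \<le> l \<Longrightarrow> l \<le> 2 \<Longrightarrow> \<bar>H x l\<bar> \<le> w x"
    and w: "integrable lborel w"
  shows "integrable lborel (\<lambda>x. H x 1)" "integral\<^sup>L lborel (\<lambda>x. H x 1) = 0"
proof -
  define e :: "nat \<Rightarrow> real" where "e n = 1 / (real n + 1)" for n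
  have e: "0 < e n" "e n \<le> 1" for n
    by (auto simp: e_def field_simps)
  have e_lim: "(\<lambda>n. 1 + e n) \<longlonglongrightarrow> 1"
    using tendsto_add[OF tendsto_const[of 1] LIMSEQ_inverse_real_of_nat_add[of 0]]
    by (simp add: e_def inverse_eq_divide add.commute)
  define f where "f x l = l ^ DIM('a) * h (l *\<^sub>R x)" for x l
  define q where "q n x = (f x (1 + e n) - f x 1) / e n" for n x
  have [measurable]: "q n \<in> borel_measurable lborel" for n
    unfolding q_def f_def by measurable
  have q_lim: "(\<lambda>n. q n x) \<longlonglongrightarrow> H x 1" for x
  proof -
    have "((\<lambda>y. (f x y - f x 1) / (y - 1)) \<longlongrightarrow> H x 1) (at 1)"
      using H[of 1 x] by (simp add: f_def has_field_derivative_iff)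
    moreover have "filterlim (\<lambda>n. 1 + e n) (at 1) sequentially"
      using e_lim e(1) by (intro filterlim_atI) (auto intro!: always_eventually simp: less_imp_neq[symmetric])
    ultimately show ?thesis
      unfolding q_def by (fastforce dest: filterlim_compose)
  qed
  have q_bound: "norm (q n x) \<le> w x" for n x
  proof -
    have "\<exists>z>1. z < 1 + e n \<and> f x (1 + e n) - f x 1 = (1 + e n - 1) * H x z"
      by (rule MVT2) (use e[of n] H[of _ x] in \<open>auto simp: f_def\<close>)
    then obtain z where z: "1 < z" "z < 1 + e n" "f x (1 + e n) - f x 1 = e n * H x z"
      by auto
    then show ?thesis
      using H_bound[of z x] e[of n] by (simp add: q_def)
  qed
  have q_int: "integral\<^sup>L lborel (q n) = 0" for n
  proof -
    have c: "1 + e n > 0" using e[of n] by simp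
    have "integral\<^sup>L lborel (q n) = ((1 + e n) ^ DIM('a) * integral\<^sup>L lborel (\<lambda>x. h ((1 + e n) *\<^sub>R x))
        - integral\<^sup>L lborel h) / e n"
      unfolding q_def f_def using lborel_integral_dilation(1)[OF _ h c] h by simp
    then show ?thesis
      using lborel_integral_dilation(2)[OF _ h c] by simp
  qed
  have H_meas: "(\<lambda>x. H x 1) \<in> borel_measurable lborel"
    by (rule borel_measurable_LIMSEQ_real[OF q_lim]) simp
  have q_lim_AE: "AE x in lborel. (\<lambda>n. q n x) \<longlonglongrightarrow> H x 1"
    using q_lim by simp
  have q_bound_AE: "AE x in lborel. norm (q n x) \<le> w x" for n
    using q_bound by simp
  show "integrable lborel (\<lambda>x. H x 1)"
    by (rule integrable_dominated_convergence[OF H_meas _ w q_lim_AE q_bound_AE]) simp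
  have "(\<lambda>n. integral\<^sup>L lborel (q n)) \<longlonglongrightarrow> integral\<^sup>L lborel (\<lambda>x. H x 1)"
    by (rule integral_dominated_convergence[OF H_meas _ w q_lim_AE q_bound_AE]) simp
  then show "integral\<^sup>L lborel (\<lambda>x. H x 1) = 0"
    using LIMSEQ_unique[of "\<lambda>n. 0::real"] by (simp add: q_int)
qed

lemma integrable_bounded_in_cball:
  fixes f :: "'a::euclidean_space \<Rightarrow> real"
  assumes "f \<in> borel_measurable lborel"
    and "\<And>x. f x \<noteq> 0 \<Longrightarrow> norm x \<le> \<rho>" and "\<And>x. norm x \<le> \<rho> \<Longrightarrow> \<bar>f x\<bar> \<le> C"
  shows "integrable lborel f"
proof (rule Bochner_Integration.integrable_bound)
  show "integrable lborel (\<lambda>x. C * indicator (cball 0 \<rho>) x)"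
    by (intro integrable_mult_right integrable_real_indicator emeasure_bounded_finite) auto
  show "AE x in lborel. norm (f x) \<le> norm (C * indicator (cball 0 \<rho>) x :: real)"
    using assms(2,3) by (intro AE_I2) (fastforce simp: indicator_def)
qed (use assms(1) in simp)

section \<open>Smooth functions with compact support\<close>

lemma smooth_has_derivative:
  assumes "smooth u"
  shows "(u has_derivative frechet_derivative u (at y)) (at y)"
  using assms frechet_derivative_works unfolding smooth_def by (metis iter_partial.simps(1))

lemma smooth_partial_deriv_differentiable:
  assumes "smooth u"
  shows "partial_deriv i u differentiable at y"
  using assms unfolding smooth_def by (metis iter_partial.simps)

lemma frechet_derivative_smooth_eq_grad:
  assumes u: "smooth u"
  shows "frechet_derivative u (at y) v = v \<bullet> grad u y"
proof -
  let ?D = "frechet_derivative u (at y)"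
  have lin: "linear ?D"
    using has_derivative_linear[OF smooth_has_derivative[OF u]] .
  have partial: "partial_deriv i u y = ?D (axis i 1)" for i
  proof -
    have "((\<lambda>t. y + t *\<^sub>R axis i 1) has_derivative (\<lambda>t. t *\<^sub>R axis i 1)) (at 0)"
      by (auto intro!: derivative_eq_intros)
    from has_derivative_compose[OF this smooth_has_derivative[OF u]]
    have "((\<lambda>t. u (y + t *\<^sub>R axis i 1)) has_derivative (\<lambda>t. ?D (axis i 1) * t)) (at 0)"
      using lin by (simp add: o_def linear_scale mult.commute)
    then show ?thesis
      unfolding partial_deriv_def by (intro DERIV_imp_deriv) (simp add: has_field_derivative_def)
  qed
  have "v = (\<Sum>i\<in>UNIV. v $ i *\<^sub>R axis i 1)"
    by (simp add: vec_eq_iff axis_def sum_component if_distrib cong: if_cong)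
  then have "?D v = ?D (\<Sum>i\<in>UNIV. v $ i *\<^sub>R axis i 1)"
    by (rule arg_cong)
  also have "\<dots> = (\<Sum>i\<in>UNIV. v $ i * ?D (axis i 1))"
    using lin by (simp add: linear_sum linear_scale)
  finally show ?thesis
    by (simp add: inner_vec_def grad_def partial)
qed

lemma smooth_ray_derivative:
  assumes u: "smooth u"
  shows "((\<lambda>l. u (l *\<^sub>R x)) has_real_derivative (x \<bullet> grad u (l *\<^sub>R x))) (at l)"
proof -
  let ?D = "frechet_derivative u (at (l *\<^sub>R x))"
  have lin: "linear ?D"
    using has_derivative_linear[OF smooth_has_derivative[OF u]] .
  have "((\<lambda>t. t *\<^sub>R x) has_derivative (\<lambda>t. t *\<^sub>R x)) (at l)"
    by (auto intro!: derivative_eq_intros)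
  from has_derivative_compose[OF this smooth_has_derivative[OF u]]
  have "((\<lambda>t. u (t *\<^sub>R x)) has_derivative (\<lambda>t. ?D x * t)) (at l)"
    using lin by (simp add: o_def linear_scale mult.commute)
  then show ?thesis
    by (simp add: has_field_derivative_def frechet_derivative_smooth_eq_grad[OF u])
qed

lemma continuous_on_smooth:
  assumes "smooth u"
  shows "continuous_on UNIV u"
proof (rule continuous_at_imp_continuous_on, rule ballI)
  show "isCont u y" for y
    using smooth_has_derivative[OF assms, of y] differentiableI differentiable_imp_continuous_within by blast
qed

lemma continuous_on_grad_smooth:
  assumes "smooth u"
  shows "continuous_on UNIV (grad u)"
  unfolding grad_def
proof (intro continuous_on_vec_lambda continuous_at_imp_continuous_on ballI)
  show "isCont (partial_deriv i u) y" for i y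
    using smooth_partial_deriv_differentiable[OF assms] differentiable_imp_continuous_within by blast
qed

lemma continuous_bounded_on_cball:
  fixes f :: "'a::euclidean_space \<Rightarrow> 'b::real_normed_vector"
  assumes "continuous_on UNIV f"
  obtains B where "B > 0" "\<And>y. norm y \<le> \<rho> \<Longrightarrow> norm (f y) \<le> B"
proof -
  have "bounded (f ` cball 0 \<rho>)"
    by (intro compact_imp_bounded compact_continuous_image continuous_on_subset[OF assms]) auto
  then show ?thesis
    using that unfolding bounded_pos by auto
qed

lemma C0_infty_support_radius:
  fixes u :: "real^'n \<Rightarrow> real"
  assumes "u \<in> C0_infty (ball 0 1)"
  obtains \<rho> where "0 \<le> \<rho>" "\<rho> < 1" "\<And>x. u x \<noteq> 0 \<Longrightarrow> norm x \<le> \<rho>"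
proof (cases "closure {x. u x \<noteq> 0} = {}")
  case True
  have "norm x \<le> 0" if "u x \<noteq> 0" for x
    using True that closure_subset[of "{x. u x \<noteq> 0}"] by auto
  then show ?thesis
    using that[of 0] by simp
next
  case False
  let ?S = "closure {x. u x \<noteq> 0}"
  have S: "compact ?S" "?S \<subseteq> ball 0 1"
    using assms unfolding C0_infty_def by auto
  obtain x0 where x0: "x0 \<in> ?S" "\<And>y. y \<in> ?S \<Longrightarrow> norm y \<le> norm x0"
    using continuous_attains_sup[OF S(1) False continuous_on_norm_id] by auto
  show ?thesis
  proof (rule that[of "norm x0"])
    show "norm x0 < 1"
      using x0(1) S(2) by auto
    show "norm x \<le> norm x0" if "u x \<noteq> 0" for x
      using that x0(2) closure_subset[of "{x. u x \<noteq> 0}"] by auto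
  qed simp
qed

text \<open>The \<open>\<lambda>\<close>-derivative of \<open>\<lambda>\<^sup>N u(\<lambda>x)\<^sup>2 k(\<lambda>|x|)\<close>, \<open>N = CARD('n)\<close>, written in terms of the
  derivative \<open>k'\<close> of the radial weight \<open>k\<close>; at \<open>\<lambda> = 1\<close> it is \<open>div (u\<^sup>2 k(|x|) x)\<close>.\<close>
definition radial_dilation_deriv ::
    "(real^'n::finite \<Rightarrow> real) \<Rightarrow> (real \<Rightarrow> real) \<Rightarrow> (real \<Rightarrow> real) \<Rightarrow> real^'n \<Rightarrow> real \<Rightarrow> real" where
  "radial_dilation_deriv u k k' x l =
     real CARD('n) * l ^ (CARD('n) - 1) * ((u (l *\<^sub>R x))\<^sup>2 * k (l * norm x))
     + l ^ CARD('n) * ((u (l *\<^sub>R x))\<^sup>2 * (norm x * k' (l * norm x))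
                       + 2 * k (l * norm x) * u (l *\<^sub>R x) * (x \<bullet> grad u (l *\<^sub>R x)))"

lemma has_derivative_radial_dilation:
  fixes u :: "real^'n \<Rightarrow> real" and k k' :: "real \<Rightarrow> real"
  assumes u: "smooth u" and supp: "\<And>x. u x \<noteq> 0 \<Longrightarrow> norm x \<le> \<rho>" and "\<rho> < R"
    and k': "\<And>r. 0 < r \<Longrightarrow> r < R \<Longrightarrow> (k has_real_derivative k' r) (at r)" and l: "0 < l"
  shows "((\<lambda>l. l ^ CARD('n) * ((u (l *\<^sub>R x))\<^sup>2 * k (norm (l *\<^sub>R x))))
           has_real_derivative radial_dilation_deriv u k k' x l) (at l)"
proof (cases "x = 0")
  case True
  then show ?thesis
    using DERIV_mult[OF DERIV_pow[of "CARD('n)" l] DERIV_const[of "(u 0)\<^sup>2 * k 0"]]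
    by (simp add: radial_dilation_deriv_def)
next
  case x: False
  show ?thesis
  proof (cases "l * norm x \<le> \<rho>")
    case True
    have r: "0 < l * norm x" "l * norm x < R"
      using True x l \<open>\<rho> < R\<close> by auto
    have du: "((\<lambda>l. (u (l *\<^sub>R x))\<^sup>2) has_real_derivative 2 * u (l *\<^sub>R x) * (x \<bullet> grad u (l *\<^sub>R x))) (at l)"
      using DERIV_mult[OF smooth_ray_derivative[OF u, of x l] smooth_ray_derivative[OF u, of x l]]
      by (simp add: power2_eq_square algebra_simps)
    have dk: "((\<lambda>l. k (l * norm x)) has_real_derivative k' (l * norm x) * norm x) (at l)"
      using DERIV_chain2[OF k'[OF r] DERIV_cmult_right[OF DERIV_ident, of "norm x"]] by simp
    have "((\<lambda>l. l ^ CARD('n) * ((u (l *\<^sub>R x))\<^sup>2 * k (l * norm x)))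
        has_real_derivative radial_dilation_deriv u k k' x l) (at l)"
      using DERIV_mult[OF DERIV_pow[of "CARD('n)"] DERIV_mult[OF du dk]]
      by (simp add: radial_dilation_deriv_def algebra_simps)
    then show ?thesis
      by (rule has_field_derivative_transform_within_open[of _ _ _ "{0<..}"]) (use l in auto)
  next
    case False
    text \<open>Outside the support radius both sides vanish in a neighbourhood of \<open>l\<close>.\<close>
    define Out where "Out = {\<mu>::real. \<rho> < norm (\<mu> *\<^sub>R x)}"
    have "open Out" "l \<in> Out"
      using False l by (auto simp: Out_def intro!: open_Collect_less continuous_intros)
    moreover have u0: "u (\<mu> *\<^sub>R x) = 0" if "\<mu> \<in> Out" for \<mu>
      using that supp by (force simp: Out_def)
    ultimately have "((\<lambda>l. l ^ CARD('n) * ((u (l *\<^sub>R x))\<^sup>2 * k (norm (l *\<^sub>R x)))) has_real_derivative 0) (at l)"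
      by (intro has_field_derivative_transform_within_open[OF DERIV_const]) auto
    then show ?thesis
      using u0[OF \<open>l \<in> Out\<close>] by (simp add: radial_dilation_deriv_def)
  qed
qed

lemma dilation_derivative_bound:
  fixes n l U k z X Ub K Z B :: real
  assumes "0 \<le> n" "1 \<le> l" "l \<le> 2" "\<bar>U\<bar> \<le> Ub" "\<bar>k\<bar> \<le> K" "\<bar>z\<bar> \<le> Z" "\<bar>X\<bar> \<le> B"
  shows "\<bar>n * l ^ (m - 1) * (U\<^sup>2 * k) + l ^ m * (U\<^sup>2 * z + 2 * k * U * X)\<bar>
           \<le> 2 ^ m * (n * (Ub\<^sup>2 * K) + (Ub\<^sup>2 * Z + 2 * K * Ub * B))"
proof -
  have U2: "U\<^sup>2 \<le> Ub\<^sup>2"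
    using assms power_mono[of "\<bar>U\<bar>" Ub 2] by simp
  have b1: "\<bar>U\<^sup>2 * k\<bar> \<le> Ub\<^sup>2 * K"
    using U2 assms by (simp add: abs_mult mult_mono)
  have b2: "\<bar>U\<^sup>2 * z + 2 * k * U * X\<bar> \<le> Ub\<^sup>2 * Z + 2 * K * Ub * B"
  proof -
    have "\<bar>U\<^sup>2 * z\<bar> \<le> Ub\<^sup>2 * Z"
      using U2 assms by (simp add: abs_mult mult_mono)
    moreover have "\<bar>k * U * X\<bar> \<le> K * Ub * B"
      using assms by (simp add: abs_mult mult_mono)
    moreover have "\<bar>U\<^sup>2 * z + 2 * k * U * X\<bar> \<le> \<bar>U\<^sup>2 * z\<bar> + 2 * \<bar>k * U * X\<bar>"
      using abs_triangle_ineq[of "U\<^sup>2 * z" "2 * (k * U * X)"] by (simp add: abs_mult mult.assoc)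
    ultimately show ?thesis
      by linarith
  qed
  have p1: "l ^ (m - 1) \<le> 2 ^ m"
  proof -
    have "l ^ (m - 1) \<le> 2 ^ (m - 1)"
      using assms by (intro power_mono) auto
    also have "(2::real) ^ (m - 1) \<le> 2 ^ m"
      by (intro power_increasing) auto
    finally show ?thesis .
  qed
  have p2: "l ^ m \<le> 2 ^ m"
    using assms by (intro power_mono) auto
  have "\<bar>n * l ^ (m - 1) * (U\<^sup>2 * k) + l ^ m * (U\<^sup>2 * z + 2 * k * U * X)\<bar>
      \<le> n * l ^ (m - 1) * \<bar>U\<^sup>2 * k\<bar> + l ^ m * \<bar>U\<^sup>2 * z + 2 * k * U * X\<bar>"
    using assms abs_triangle_ineq[of "n * l ^ (m - 1) * (U\<^sup>2 * k)" "l ^ m * (U\<^sup>2 * z + 2 * k * U * X)"]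
    by (simp add: abs_mult)
  also have "\<dots> \<le> n * 2 ^ m * (Ub\<^sup>2 * K) + 2 ^ m * (Ub\<^sup>2 * Z + 2 * K * Ub * B)"
    using assms b1 b2 p1 p2 by (intro add_mono mult_mono) auto
  also have "\<dots> = 2 ^ m * (n * (Ub\<^sup>2 * K) + (Ub\<^sup>2 * Z + 2 * K * Ub * B))"
    by (simp add: ring_distribs mult_ac)
  finally show ?thesis .
qed

lemma radial_dilation_deriv_bound:
  fixes u :: "real^'n \<Rightarrow> real" and k k' :: "real \<Rightarrow> real"
  assumes supp: "\<And>x. u x \<noteq> 0 \<Longrightarrow> norm x \<le> \<rho>" and "0 \<le> \<rho>"
    and Ub: "\<And>y. norm y \<le> \<rho> \<Longrightarrow> \<bar>u y\<bar> \<le> Ub" and Gb: "\<And>y. norm y \<le> \<rho> \<Longrightarrow> norm (grad u y) \<le> Gb"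
    and k_bound: "\<And>r. 0 \<le> r \<Longrightarrow> r \<le> \<rho> \<Longrightarrow> \<bar>k r\<bar> \<le> K"
    and k'_bound: "\<And>r. 0 < r \<Longrightarrow> r \<le> \<rho> \<Longrightarrow> \<bar>r * k' r\<bar> \<le> K'" and "0 \<le> K'"
    and l: "1 \<le> l" "l \<le> 2"
  shows "\<bar>radial_dilation_deriv u k k' x l\<bar>
           \<le> 2 ^ CARD('n) * (real CARD('n) * (Ub\<^sup>2 * K) + (Ub\<^sup>2 * K' + 2 * K * Ub * (\<rho> * Gb)))
             * indicator (cball 0 \<rho>) x"
proof (cases "u (l *\<^sub>R x) = 0")
  case True
  have "0 \<le> K" "0 \<le> Ub" "0 \<le> Gb"
    using order_trans[OF abs_ge_zero k_bound[of 0]] order_trans[OF abs_ge_zero Ub[of 0]]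
      order_trans[OF norm_ge_zero Gb[of 0]] \<open>0 \<le> \<rho>\<close> by auto
  then show ?thesis
    using True \<open>0 \<le> \<rho>\<close> \<open>0 \<le> K'\<close> by (simp add: radial_dilation_deriv_def)
next
  case False
  have lx: "l * norm x \<le> \<rho>"
    using supp[OF False] l by simp
  then have x: "norm x \<le> \<rho>" "norm (l *\<^sub>R x) \<le> \<rho>"
    using l mult_right_mono[of 1 l "norm x"] by (auto simp: mult.commute)
  have z: "\<bar>norm x * k' (l * norm x)\<bar> \<le> K'"
  proof (cases "x = 0")
    case False
    then have "\<bar>norm x * k' (l * norm x)\<bar> = \<bar>l * norm x * k' (l * norm x)\<bar> / l"
      using l by (simp add: abs_mult)
    also have "\<dots> \<le> K'"
      using k'_bound[of "l * norm x"] \<open>0 \<le> K'\<close> False lx l mult_left_mono[of 1 l K']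
      by (simp add: divide_le_eq)
    finally show ?thesis .
  qed (use \<open>0 \<le> K'\<close> in simp)
  have X: "\<bar>x \<bullet> grad u (l *\<^sub>R x)\<bar> \<le> \<rho> * Gb"
    using Cauchy_Schwarz_ineq2[of x "grad u (l *\<^sub>R x)"] Gb[OF x(2)] x(1)
    by (smt (verit) mult_mono norm_ge_zero)
  have "\<bar>radial_dilation_deriv u k k' x l\<bar>
      \<le> 2 ^ CARD('n) * (real CARD('n) * (Ub\<^sup>2 * K) + (Ub\<^sup>2 * K' + 2 * K * Ub * (\<rho> * Gb)))"
    unfolding radial_dilation_deriv_def
    using l z X Ub[OF x(2)] k_bound[of "l * norm x"] lx
    by (intro dilation_derivative_bound) auto
  then show ?thesis
    using x by simp
qed

text \<open>It is \<open>integral_dilation_derivative_zero\<close> for \<open>h = u\<^sup>2 k(|x|)\<close>; no regularity of \<open>k\<close> at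
  the origin is needed.\<close>
lemma radial_divergence_identity:
  fixes u :: "real^'n \<Rightarrow> real" and k k' :: "real \<Rightarrow> real"
  assumes u: "smooth u" and supp: "\<And>x. u x \<noteq> 0 \<Longrightarrow> norm x \<le> \<rho>" and \<rho>: "0 \<le> \<rho>" "\<rho> < R"
    and [measurable]: "k \<in> borel_measurable borel"
    and k': "\<And>r. 0 < r \<Longrightarrow> r < R \<Longrightarrow> (k has_real_derivative k' r) (at r)"
    and k_bound: "\<And>r. 0 \<le> r \<Longrightarrow> r \<le> \<rho> \<Longrightarrow> \<bar>k r\<bar> \<le> K"
    and k'_bound: "\<And>r. 0 < r \<Longrightarrow> r \<le> \<rho> \<Longrightarrow> \<bar>r * k' r\<bar> \<le> K'" "0 \<le> K'"
  defines "D \<equiv> \<lambda>x. (u x)\<^sup>2 * (CARD('n) * k (norm x) + norm x * k' (norm x))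
                  + 2 * k (norm x) * u x * (x \<bullet> grad u x)"
  shows "integrable lborel D" "integral\<^sup>L lborel D = 0"
proof -
  have [measurable]: "u \<in> borel_measurable borel"
    by (rule borel_measurable_continuous_onI[OF continuous_on_smooth[OF u]])
  obtain Ub where Ub: "\<And>y. norm y \<le> \<rho> \<Longrightarrow> \<bar>u y\<bar> \<le> Ub"
    using continuous_bounded_on_cball[OF continuous_on_smooth[OF u]] by (metis real_norm_def)
  obtain Gb where Gb: "\<And>y. norm y \<le> \<rho> \<Longrightarrow> norm (grad u y) \<le> Gb"
    using continuous_bounded_on_cball[OF continuous_on_grad_smooth[OF u]] by metis
  define h where "h x = (u x)\<^sup>2 * k (norm x)" for x
  have [measurable]: "h \<in> borel_measurable borel"
    unfolding h_def by measurable
  have h_int: "integrable lborel h"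
  proof (rule integrable_bounded_in_cball)
    show "norm x \<le> \<rho>" if "h x \<noteq> 0" for x
      using that supp by (auto simp: h_def)
    show "\<bar>h x\<bar> \<le> Ub\<^sup>2 * K" if "norm x \<le> \<rho>" for x
      using that Ub[OF that] k_bound[of "norm x"] power_mono[of "\<bar>u x\<bar>" Ub 2]
      by (simp add: h_def abs_mult mult_mono)
  qed simp
  have deriv: "((\<lambda>l. l ^ DIM(real^'n) * h (l *\<^sub>R x)) has_real_derivative radial_dilation_deriv u k k' x l) (at l)"
    if "1 \<le> l" "l \<le> 2" for x l
    using has_derivative_radial_dilation[OF u supp \<rho>(2) k', of l x] that by (simp add: h_def)
  define C where "C = 2 ^ CARD('n) * (real CARD('n) * (Ub\<^sup>2 * K) + (Ub\<^sup>2 * K' + 2 * K * Ub * (\<rho> * Gb)))"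
  have bound: "\<bar>radial_dilation_deriv u k k' x l\<bar> \<le> C * indicator (cball 0 \<rho>) x"
    if "1 \<le> l" "l \<le> 2" for x l
    unfolding C_def by (rule radial_dilation_deriv_bound[OF supp \<rho>(1) Ub Gb k_bound k'_bound that])
  have w: "integrable lborel (\<lambda>x. C * indicator (cball 0 \<rho>) x :: real)"
    by (intro integrable_mult_right integrable_real_indicator emeasure_bounded_finite) auto
  have "D = (\<lambda>x. radial_dilation_deriv u k k' x 1)"
    by (simp add: D_def radial_dilation_deriv_def fun_eq_iff algebra_simps)
  then show "integrable lborel D" "integral\<^sup>L lborel D = 0"
    using integral_dilation_derivative_zero[OF _ h_int deriv bound w] by simp_all
qed

text \<open>How the divergence identity is used: if \<open>G = F + D\<close> with \<open>\<integral> D = 0\<close> and \<open>G \<ge> 0\<close>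
  integrable, then any lower bound \<open>f\<close> of \<open>G\<close> and upper bound \<open>w\<close> of \<open>F\<close> satisfy
  \<open>\<integral>\<^sup>+ f \<le> \<integral> G = \<integral> F \<le> \<integral>\<^sup>+ w\<close>.\<close>
lemma nn_integral_le_by_null_integral:
  fixes F G D :: "'a \<Rightarrow> real"
  assumes D: "integrable M D" "integral\<^sup>L M D = 0"
    and G: "integrable M G" "\<And>x. 0 \<le> G x" and GFD: "\<And>x. G x = F x + D x"
    and lower: "\<And>x. f x \<le> ennreal (G x)" and upper: "\<And>x. ennreal (F x) \<le> w x"
  shows "integral\<^sup>N M f \<le> integral\<^sup>N M w"
proof -
  have F_eq: "F = (\<lambda>x. G x - D x)"
    using GFD by (auto simp: fun_eq_iff)
  have F: "integrable M F"
    unfolding F_eq using G D by simp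
  have "integral\<^sup>N M f \<le> (\<integral>\<^sup>+ x. ennreal (G x) \<partial>M)"
    by (intro nn_integral_mono lower)
  also have "\<dots> = ennreal (integral\<^sup>L M G)"
    by (rule nn_integral_eq_integral[OF G(1)]) (simp add: G(2))
  also have "\<dots> = ennreal (integral\<^sup>L M F)"
    unfolding F_eq using G D by simp
  also have "\<dots> \<le> ennreal (integral\<^sup>L M (\<lambda>x. max 0 (F x)))"
    by (intro ennreal_leI integral_mono F integrable_max) auto
  also have "\<dots> = (\<integral>\<^sup>+ x. ennreal (F x) \<partial>M)"
    by (subst nn_integral_eq_integral[symmetric]) (auto intro!: integrable_max F simp: ennreal_max_0)
  also have "\<dots> \<le> integral\<^sup>N M w"
    by (intro nn_integral_mono upper)
  finally show ?thesis .
qed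

lemma nn_integral_le_of_incseq:
  assumes "incseq f" "\<And>m. f m \<in> borel_measurable M" "\<And>x. (\<lambda>m. f m x) \<longlonglongrightarrow> g x"
    and "\<And>m. ennreal c * integral\<^sup>N M (f m) \<le> L"
  shows "ennreal c * integral\<^sup>N M g \<le> L"
proof (rule LIMSEQ_le_const2)
  show "(\<lambda>m. ennreal c * integral\<^sup>N M (f m)) \<longlonglongrightarrow> ennreal c * integral\<^sup>N M g"
    by (intro ennreal_tendsto_cmult nn_integral_LIMSEQ assms) simp
qed (use assms(4) in auto)

section \<open>The radial weight\<close>

definition weight_q :: "real \<Rightarrow> real \<Rightarrow> real \<Rightarrow> real" where
  "weight_q N a r = r\<^sup>2 - a * r powr (N / 2 + 1)"

definition weight_p :: "real \<Rightarrow> real \<Rightarrow> real" where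
  "weight_p N r = r\<^sup>2 - r powr (N / 2)"

text \<open>With \<open>s = N/2 - 2\<close> the weights factor as \<open>q = r\<^sup>2 (1 - E)\<close>, \<open>p = r\<^sup>2 (1 - T)\<close>, where
  \<open>E = a r\<^bsup>s+1\<^esup>\<close> and \<open>T = r\<^sup>s\<close>.\<close>
definition hardy_E :: "real \<Rightarrow> real \<Rightarrow> real \<Rightarrow> real" where
  "hardy_E a s r = a * r powr (s + 1)"

definition hardy_T :: "real \<Rightarrow> real \<Rightarrow> real" where
  "hardy_T s r = r powr s"

text \<open>The radial weight of the vector field is \<open>k = g / (r\<^sup>4 + d)\<close> with \<open>g = s / ((1 - E)(1 - T))\<close>;
  \<open>rg\<close> is \<open>r g'(r)\<close> and \<open>k'\<close> is the derivative of \<open>k\<close>.\<close>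
definition hardy_g :: "real \<Rightarrow> real \<Rightarrow> real \<Rightarrow> real" where
  "hardy_g a s r = s / ((1 - hardy_E a s r) * (1 - hardy_T s r))"

definition hardy_rg :: "real \<Rightarrow> real \<Rightarrow> real \<Rightarrow> real" where
  "hardy_rg a s r = s * ((s + 1) * hardy_E a s r * (1 - hardy_T s r) + (1 - hardy_E a s r) * s * hardy_T s r)
                      / ((1 - hardy_E a s r) * (1 - hardy_T s r))\<^sup>2"

definition hardy_k :: "real \<Rightarrow> real \<Rightarrow> real \<Rightarrow> real \<Rightarrow> real" where
  "hardy_k a s d r = hardy_g a s r / (r ^ 4 + d)"

definition hardy_k' :: "real \<Rightarrow> real \<Rightarrow> real \<Rightarrow> real \<Rightarrow> real" where
  "hardy_k' a s d r = (hardy_rg a s r * (r ^ 4 + d) - 4 * r ^ 4 * hardy_g a s r) / (r * (r ^ 4 + d)\<^sup>2)"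

text \<open>On \<open>[0, 1)\<close> both \<open>E\<close> and \<open>T\<close> lie in \<open>[0, 1)\<close>, so all denominators are positive.\<close>
lemma hardy_E_T_range:
  assumes "0 \<le> a" "a < 1" "s > 0" "0 \<le> r" "r < 1"
  shows "0 \<le> hardy_E a s r" "hardy_E a s r < 1" "0 \<le> hardy_T s r" "hardy_T s r < 1"
proof -
  have "r powr (s + 1) \<le> 1"
    using assms powr_mono2[of "s + 1" r 1] by simp
  then show "0 \<le> hardy_E a s r" "hardy_E a s r < 1"
    using assms mult_left_le[of "r powr (s + 1)" a] by (auto simp: hardy_E_def)
  show "0 \<le> hardy_T s r" "hardy_T s r < 1"
    using assms powr_less_mono2[of s r 1] by (auto simp: hardy_T_def)
qed

lemma hardy_radial_factors:
  fixes r s a N :: real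
  assumes "r \<ge> 0" "N = 2 * s + 4"
  shows "weight_q N a r = r\<^sup>2 * (1 - hardy_E a s r)"
    and "weight_p N r = r\<^sup>2 * (1 - hardy_T s r)"
proof -
  have N: "N / 2 + 1 = 2 + (s + 1)" "N / 2 = 2 + s"
    using assms(2) by simp_all
  have "r powr (N / 2 + 1) = r\<^sup>2 * r powr (s + 1) \<and> r powr (N / 2) = r\<^sup>2 * r powr s"
  proof (cases "r = 0")
    case False
    then show ?thesis
      using assms(1) unfolding N by (simp add: powr_add power_numeral_reduce)
  qed (simp add: N)
  then show "weight_q N a r = r\<^sup>2 * (1 - hardy_E a s r)" and "weight_p N r = r\<^sup>2 * (1 - hardy_T s r)"
    by (simp_all add: weight_q_def weight_p_def hardy_E_def hardy_T_def algebra_simps)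
qed

lemma hardy_g_deriv:
  assumes "0 \<le> a" "a < 1" "s > 0" "0 < r" "r < 1"
  shows "(hardy_g a s has_real_derivative hardy_rg a s r / r) (at r)"
proof -
  note ET = hardy_E_T_range[OF assms(1-3) less_imp_le[OF assms(4)] assms(5)]
  have dE: "(hardy_E a s has_real_derivative (s + 1) * hardy_E a s r / r) (at r)"
  proof -
    have "(s + 1) * hardy_E a s r / r = a * ((s + 1) * r powr s)"
      using assms by (simp add: hardy_E_def powr_add)
    then show ?thesis
      unfolding hardy_E_def[abs_def] using assms by (auto intro!: derivative_eq_intros)
  qed
  have dT: "(hardy_T s has_real_derivative s * hardy_T s r / r) (at r)"
    unfolding hardy_T_def[abs_def] using assms
    by (auto intro!: derivative_eq_intros simp: powr_diff)
  define E T where "E = hardy_E a s r" and "T = hardy_T s r"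
  have nz: "1 - E \<noteq> 0" "1 - T \<noteq> 0" "r \<noteq> 0"
    using ET assms by (auto simp: E_def T_def)
  have "((\<lambda>r. (1 - hardy_E a s r) * (1 - hardy_T s r)) has_real_derivative
          - ((s + 1) * E / r) * (1 - T) - (1 - E) * (s * T / r)) (at r)"
    by (rule DERIV_cong[OF DERIV_mult[OF DERIV_diff[OF DERIV_const[of 1] dE] DERIV_diff[OF DERIV_const[of 1] dT]]])
       (simp add: E_def T_def algebra_simps)
  from DERIV_divide[OF DERIV_const[of s] this]
  have "((\<lambda>r. s / ((1 - hardy_E a s r) * (1 - hardy_T s r))) has_real_derivative
          (0 * ((1 - E) * (1 - T)) - s * (- ((s + 1) * E / r) * (1 - T) - (1 - E) * (s * T / r)))
          / ((1 - E) * (1 - T) * ((1 - E) * (1 - T)))) (at r)"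
    using nz by (simp add: E_def T_def)
  moreover have "(0 * ((1 - E) * (1 - T)) - s * (- ((s + 1) * E / r) * (1 - T) - (1 - E) * (s * T / r)))
          / ((1 - E) * (1 - T) * ((1 - E) * (1 - T))) = hardy_rg a s r / r"
  proof -
    have "0 * ((1 - E) * (1 - T)) - s * (- ((s + 1) * E / r) * (1 - T) - (1 - E) * (s * T / r))
        = s * ((s + 1) * E * (1 - T) + (1 - E) * s * T) / r"
      using nz by (simp add: field_simps)
    then show ?thesis
      by (simp add: hardy_rg_def E_def[symmetric] T_def[symmetric] power2_eq_square)
  qed
  ultimately have "((\<lambda>r. s / ((1 - hardy_E a s r) * (1 - hardy_T s r))) has_real_derivative hardy_rg a s r / r) (at r)"
    by simp
  then show ?thesis
    by (simp add: hardy_g_def[abs_def])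
qed

lemma hardy_k_deriv:
  assumes "0 \<le> a" "a < 1" "s > 0" "d > 0" "0 < r" "r < 1"
  shows "(hardy_k a s d has_real_derivative hardy_k' a s d r) (at r)"
proof -
  have R: "r ^ 4 + d \<noteq> 0"
    using assms by (metis add_pos_pos zero_less_power less_irrefl)
  have "((\<lambda>r. hardy_g a s r / (r ^ 4 + d)) has_real_derivative
          (hardy_rg a s r / r * (r ^ 4 + d) - hardy_g a s r * (4 * r ^ 3)) / ((r ^ 4 + d) * (r ^ 4 + d))) (at r)"
  proof (rule DERIV_divide[OF hardy_g_deriv[OF assms(1-3,5,6)]])
    show "((\<lambda>r. r ^ 4 + d) has_real_derivative 4 * r ^ 3) (at r)"
      by (auto intro!: derivative_eq_intros)
  qed (rule R)
  moreover have "(hardy_rg a s r / r * (r ^ 4 + d) - hardy_g a s r * (4 * r ^ 3)) / ((r ^ 4 + d) * (r ^ 4 + d))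
      = hardy_k' a s d r"
    using assms R by (simp add: hardy_k'_def field_simps power2_eq_square power_numeral_reduce)
  ultimately show ?thesis
    by (simp add: hardy_k_def[abs_def])
qed

text \<open>For \<open>r \<noteq> 0\<close>, \<open>r k'(r)\<close> is given by an expression that is continuous at \<open>r = 0\<close>.\<close>
lemma hardy_r_k':
  assumes "r \<noteq> 0"
  shows "r * hardy_k' a s d r = (hardy_rg a s r * (r ^ 4 + d) - 4 * r ^ 4 * hardy_g a s r) / (r ^ 4 + d)\<^sup>2"
  using assms by (simp add: hardy_k'_def)

text \<open>Both \<open>k\<close> and \<open>r k'(r)\<close> are bounded on \<open>[0, \<rho>]\<close> for \<open>\<rho> < 1\<close>: they extend continuously
  to \<open>r = 0\<close> because \<open>d > 0\<close>.\<close>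
lemma hardy_weight_bounds:
  assumes "0 \<le> a" "a < 1" "s > 0" "d > 0" "\<rho> < 1"
  obtains K K' where "\<And>r. 0 \<le> r \<Longrightarrow> r \<le> \<rho> \<Longrightarrow> \<bar>hardy_k a s d r\<bar> \<le> K"
    and "\<And>r. 0 < r \<Longrightarrow> r \<le> \<rho> \<Longrightarrow> \<bar>r * hardy_k' a s d r\<bar> \<le> K'" and "0 \<le> K'"
proof -
  let ?I = "{0..\<rho>}"
  have ET: "1 - hardy_E a s r \<noteq> 0" "1 - hardy_T s r \<noteq> 0" "r ^ 4 + d \<noteq> 0" if "r \<in> ?I" for r
  proof -
    have "0 < r ^ 4 + d"
      using that assms by (intro add_nonneg_pos) auto
    then show "1 - hardy_E a s r \<noteq> 0" "1 - hardy_T s r \<noteq> 0" "r ^ 4 + d \<noteq> 0"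
      using hardy_E_T_range[OF assms(1-3), of r] that assms by auto
  qed
  have cE: "continuous_on ?I (hardy_E a s)" and cT: "continuous_on ?I (hardy_T s)"
    unfolding hardy_E_def[abs_def] hardy_T_def[abs_def] using assms
    by (auto intro!: continuous_intros continuous_on_powr')
  have cg: "continuous_on ?I (hardy_g a s)" and crg: "continuous_on ?I (hardy_rg a s)"
    unfolding hardy_g_def[abs_def] hardy_rg_def[abs_def] using ET
    by (auto intro!: continuous_intros cE cT)
  have ck: "continuous_on ?I (hardy_k a s d)"
    unfolding hardy_k_def[abs_def] using ET by (auto intro!: continuous_intros cg)
  have crk: "continuous_on ?I (\<lambda>r. (hardy_rg a s r * (r ^ 4 + d) - 4 * r ^ 4 * hardy_g a s r) / (r ^ 4 + d)\<^sup>2)"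
    using ET by (auto intro!: continuous_intros cg crg)
  obtain K where K: "\<forall>r\<in>?I. \<bar>hardy_k a s d r\<bar> \<le> K"
    using compact_imp_bounded[OF compact_continuous_image[OF ck compact_Icc]]
    unfolding bounded_iff by auto
  obtain K' where K': "0 < K'" "\<forall>r\<in>?I.
      \<bar>(hardy_rg a s r * (r ^ 4 + d) - 4 * r ^ 4 * hardy_g a s r) / (r ^ 4 + d)\<^sup>2\<bar> \<le> K'"
    using compact_imp_bounded[OF compact_continuous_image[OF crk compact_Icc]]
    unfolding bounded_pos by auto
  show ?thesis
  proof (rule that[of K K'])
    show "\<bar>hardy_k a s d r\<bar> \<le> K" if "0 \<le> r" "r \<le> \<rho>" for r
      using K that by auto
    show "\<bar>r * hardy_k' a s d r\<bar> \<le> K'" if "0 < r" "r \<le> \<rho>" for r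
      using K' that hardy_r_k'[of r] by auto
  qed (use K' in simp)
qed

text \<open>The algebraic core: with \<open>A = 1 - E\<close>, \<open>B = 1 - T\<close>, \<open>g = s/(AB)\<close> and \<open>m = R/(R+d) \<in> [0,1]\<close>,
  the left-hand side below is \<open>\<ge> (2 s g + rg - A g\<^sup>2)/(R+d) = (s\<^sup>2/(AB) + s(s+1)E/(A\<^sup>2B))/(R+d)\<close>.\<close>
lemma hardy_key_inequality:
  fixes s E T R d :: real
  assumes s: "s > 0" and E: "0 \<le> E" "E < 1" and T: "0 \<le> T" "T < 1" and R: "0 \<le> R" and d: "d > 0"
  defines "g \<equiv> s / ((1 - E) * (1 - T))"
    and "rg \<equiv> s * ((s + 1) * E * (1 - T) + (1 - E) * s * T) / ((1 - E) * (1 - T))\<^sup>2"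
  shows "s\<^sup>2 / ((R + d) * (1 - E) * (1 - T))
         \<le> (2 * s + 4) * (g / (R + d)) + (rg * (R + d) - 4 * R * g) / (R + d)\<^sup>2 - R * (1 - E) * (g / (R + d))\<^sup>2"
proof -
  define A B D m where "A = 1 - E" and "B = 1 - T" and "D = R + d" and "m = R / D"
  have A: "0 < A" "A \<le> 1" and B: "0 < B" and D: "0 < D"
    using E T R d by (auto simp: A_def B_def D_def)
  have m: "0 \<le> m" "m \<le> 1"
    using R d by (auto simp: m_def D_def)
  have g: "g = s / (A * B)" and g0: "0 \<le> g"
    using s A B by (simp_all add: g_def A_def B_def)
  have rg: "rg = s * ((s + 1) * (1 - A) * B + A * s * (1 - B)) / (A * B)\<^sup>2"
    by (simp add: rg_def A_def B_def)
  have rhs: "(2 * s + 4) * (g / (R + d)) + (rg * (R + d) - 4 * R * g) / (R + d)\<^sup>2 - R * (1 - E) * (g / (R + d))\<^sup>2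
      = ((2 * s + 4) * g + rg - 4 * m * g - m * A * g\<^sup>2) / D"
  proof -
    have "(rg * (R + d) - 4 * R * g) / (R + d)\<^sup>2 = (rg - 4 * m * g) / D"
      using D by (simp add: m_def D_def field_simps power2_eq_square)
    moreover have "R * (1 - E) * (g / (R + d))\<^sup>2 = m * A * g\<^sup>2 / D"
      using D by (simp add: m_def D_def A_def field_simps power2_eq_square)
    ultimately show ?thesis
      by (simp add: D_def add_divide_distrib diff_divide_distrib)
  qed
  have "2 * s * g + rg - A * g\<^sup>2 \<le> (2 * s + 4) * g + rg - 4 * m * g - m * A * g\<^sup>2"
  proof -
    have "0 \<le> 4 * g * (1 - m)" "0 \<le> A * g\<^sup>2 * (1 - m)"
      using g0 A m by simp_all
    then show ?thesis
      by (simp add: algebra_simps)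
  qed
  moreover have "2 * s * g + rg - A * g\<^sup>2 = s\<^sup>2 / (A * B) + s * (s + 1) * E / (A\<^sup>2 * B)"
  proof -
    have E': "E = 1 - A"
      by (simp add: A_def)
    show ?thesis
      unfolding g rg E' using A B by (simp add: field_simps power2_eq_square)
  qed
  moreover have "0 \<le> s * (s + 1) * E / (A\<^sup>2 * B)"
    using s E A B by simp
  ultimately have "s\<^sup>2 / (A * B) / D \<le> ((2 * s + 4) * g + rg - 4 * m * g - m * A * g\<^sup>2) / D"
    using D by (intro divide_right_mono) auto
  then show ?thesis
    unfolding rhs by (simp add: A_def B_def D_def mult_ac)
qed

lemma hardy_weight_inequality:
  assumes "0 \<le> a" "a < 1" "s > 0" "d > 0" "0 < r" "r < 1"
  shows "s\<^sup>2 / ((r ^ 4 + d) * (1 - hardy_E a s r) * (1 - hardy_T s r))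
         \<le> (2 * s + 4) * hardy_k a s d r + r * hardy_k' a s d r
            - r ^ 4 * (1 - hardy_E a s r) * (hardy_k a s d r)\<^sup>2"
  using hardy_key_inequality[of s "hardy_E a s r" "hardy_T s r" "r ^ 4" d]
    hardy_E_T_range[of a s r] hardy_r_k'[of r a s d] assms
  by (simp add: hardy_k_def hardy_g_def hardy_rg_def)

lemma completing_square_bound:
  fixes q r X G c :: real
  assumes "q > 0" "r \<ge> 0" "\<bar>X\<bar> \<le> r * G"
  shows "- 2 * c * X - q * r\<^sup>2 * c\<^sup>2 \<le> G\<^sup>2 / q"
proof -
  have "- 2 * c * X \<le> 2 * \<bar>c\<bar> * \<bar>X\<bar>"
    by (simp add: abs_mult[symmetric] abs_le_iff)
  also have "\<dots> \<le> 2 * \<bar>c\<bar> * (r * G)"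
    using assms by (intro mult_left_mono) auto
  finally have "- 2 * c * X \<le> 2 * \<bar>c\<bar> * (r * G)" .
  moreover have "0 \<le> (G - q * r * \<bar>c\<bar>)\<^sup>2 / q"
    using assms by simp
  moreover have "(G - q * r * \<bar>c\<bar>)\<^sup>2 / q = G\<^sup>2 / q - 2 * \<bar>c\<bar> * (r * G) + q * r\<^sup>2 * c\<^sup>2"
    using assms by (simp add: field_simps power2_eq_square)
  ultimately show ?thesis
    by linarith
qed

lemma hardy_pointwise_inequality:
  assumes "0 \<le> a" "a < 1" "s > 0" "d > 0" "0 \<le> r" "r < 1" and N: "N = 2 * s + 4"
  defines "w \<equiv> r ^ 4 / (r ^ 4 + d) / (weight_q N a r * weight_p N r)"
  shows "0 \<le> w"
    and "s\<^sup>2 * w \<le> N * hardy_k a s d r + r * hardy_k' a s d r - weight_q N a r * r\<^sup>2 * (hardy_k a s d r)\<^sup>2"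
proof -
  note ET = hardy_E_T_range[OF assms(1-3,5,6)]
  note qp = hardy_radial_factors[OF assms(5) N]
  have "0 \<le> w \<and> s\<^sup>2 * w \<le> N * hardy_k a s d r + r * hardy_k' a s d r - weight_q N a r * r\<^sup>2 * (hardy_k a s d r)\<^sup>2"
  proof (cases "r = 0")
    case True
    then show ?thesis
      using assms by (simp add: w_def hardy_k_def hardy_g_def hardy_E_def hardy_T_def)
  next
    case False
    then have r: "0 < r"
      using assms by simp
    define A B where "A = 1 - hardy_E a s r" and "B = 1 - hardy_T s r"
    have pos: "0 < A" "0 < B" "0 < r ^ 4 + d"
      using ET assms(4) r by (auto simp: A_def B_def add_pos_pos)
    have prod: "(r\<^sup>2 * A) * (r\<^sup>2 * B) = r ^ 4 * (A * B)"
      by (simp add: power2_eq_square power4_eq_xxxx mult_ac)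
    have "w = r ^ 4 / (r ^ 4 + d) / (r ^ 4 * (A * B))"
      unfolding w_def qp A_def[symmetric] B_def[symmetric] prod ..
    also have "\<dots> = 1 / ((r ^ 4 + d) * A * B)"
      using pos r by (simp add: divide_simps)
    finally have w: "w = 1 / ((r ^ 4 + d) * A * B)" .
    have q: "weight_q N a r * r\<^sup>2 = r ^ 4 * A"
      by (simp add: qp A_def power2_eq_square power4_eq_xxxx algebra_simps)
    show ?thesis
      using hardy_weight_inequality[OF assms(1-4) r assms(6)] pos N
      unfolding w q A_def[symmetric] B_def[symmetric] by simp
  qed
  then show "0 \<le> w"
    and "s\<^sup>2 * w \<le> N * hardy_k a s d r + r * hardy_k' a s d r - weight_q N a r * r\<^sup>2 * (hardy_k a s d r)\<^sup>2"
    by auto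
qed

lemma weights_pos:
  assumes "0 \<le> a" "a < 1" "4 < N" "0 < r" "r < 1"
  shows "0 < weight_q N a r" "0 < weight_p N r"
proof -
  have s: "N = 2 * (N / 2 - 2) + 4" "0 < N / 2 - 2"
    using assms(3) by simp_all
  show "0 < weight_q N a r" "0 < weight_p N r"
    unfolding hardy_radial_factors[OF less_imp_le[OF assms(4)] s(1)]
    using hardy_E_T_range[OF assms(1,2) s(2) less_imp_le[OF assms(4)] assms(5)] assms(4) by simp_all
qed

text \<open>Bounds on \<open>k\<close> and \<open>r k'\<close> bound the bracket \<open>N k + r k' - q r\<^sup>2 k\<^sup>2\<close>, since \<open>0 \<le> q r\<^sup>2 \<le> 1\<close>.\<close>
lemma hardy_bracket_bound:
  assumes "0 \<le> a" "a < 1" "s > 0" "0 \<le> r" "r < 1" and N: "N = 2 * s + 4"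
    and k: "\<bar>hardy_k a s d r\<bar> \<le> K" and k': "\<bar>r * hardy_k' a s d r\<bar> \<le> K'"
  shows "\<bar>N * hardy_k a s d r + r * hardy_k' a s d r - weight_q N a r * r\<^sup>2 * (hardy_k a s d r)\<^sup>2\<bar>
           \<le> N * K + K' + K\<^sup>2"
proof -
  define Q where "Q = weight_q N a r * r\<^sup>2"
  have "Q = r ^ 4 * (1 - hardy_E a s r)"
    by (simp add: Q_def hardy_radial_factors(1)[OF assms(4) N] power2_eq_square power4_eq_xxxx algebra_simps)
  moreover have "r ^ 4 \<le> 1"
    using assms by (simp add: power_le_one)
  ultimately have Q: "0 \<le> Q" "Q \<le> 1"
    using hardy_E_T_range[OF assms(1-5)] mult_le_one[of "r ^ 4" "1 - hardy_E a s r"] assms(4) by auto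
  have "\<bar>N * hardy_k a s d r\<bar> \<le> N * K"
    using k N assms(3) by (simp add: abs_mult mult_left_mono)
  moreover have "0 \<le> Q * (hardy_k a s d r)\<^sup>2" "Q * (hardy_k a s d r)\<^sup>2 \<le> K\<^sup>2"
    using Q k mult_left_le_one_le[of "(hardy_k a s d r)\<^sup>2" Q] power_mono[of "\<bar>hardy_k a s d r\<bar>" K 2]
    by simp_all
  ultimately show ?thesis
    using k' unfolding Q_def[symmetric] by (simp add: abs_le_iff)
qed

lemma hardy_k_measurable [measurable]: "hardy_k a s d \<in> borel_measurable borel"
  unfolding hardy_k_def[abs_def] hardy_g_def[abs_def] hardy_E_def[abs_def] hardy_T_def[abs_def]
  by measurable

lemma hardy_k'_measurable [measurable]: "hardy_k' a s d \<in> borel_measurable borel"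
  unfolding hardy_k'_def[abs_def] hardy_rg_def[abs_def] hardy_g_def[abs_def]
    hardy_E_def[abs_def] hardy_T_def[abs_def]
  by measurable

lemma weight_q_measurable [measurable]: "weight_q N a \<in> borel_measurable borel"
  unfolding weight_q_def[abs_def] by measurable

lemma weight_p_measurable [measurable]: "weight_p N \<in> borel_measurable borel"
  unfolding weight_p_def[abs_def] by measurable

section \<open>The weighted Hardy inequality\<close>

lemma integrable_hardy_bracket:
  fixes u :: "real^'n \<Rightarrow> real"
  assumes u: "continuous_on UNIV u" and supp: "\<And>x. u x \<noteq> 0 \<Longrightarrow> norm x \<le> \<rho>" and "\<rho> < 1"
    and a: "0 \<le> a" "a < 1" and s: "s > 0" and d: "d > 0" and N: "N = 2 * s + 4"
  shows "integrable lborel (\<lambda>x. (u x)\<^sup>2 * (N * hardy_k a s d (norm x) + norm x * hardy_k' a s d (norm x)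
           - weight_q N a (norm x) * (norm x)\<^sup>2 * (hardy_k a s d (norm x))\<^sup>2))"
proof -
  have [measurable]: "u \<in> borel_measurable borel"
    by (rule borel_measurable_continuous_onI[OF u])
  obtain K K' where K: "\<And>r. 0 \<le> r \<Longrightarrow> r \<le> \<rho> \<Longrightarrow> \<bar>hardy_k a s d r\<bar> \<le> K"
    and K': "\<And>r. 0 < r \<Longrightarrow> r \<le> \<rho> \<Longrightarrow> \<bar>r * hardy_k' a s d r\<bar> \<le> K'" "0 \<le> K'"
    using hardy_weight_bounds[OF a s d \<open>\<rho> < 1\<close>] by blast
  obtain Ub where Ub: "\<And>y. norm y \<le> \<rho> \<Longrightarrow> \<bar>u y\<bar> \<le> Ub"
    using continuous_bounded_on_cball[OF u] by (metis real_norm_def)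
  show ?thesis
  proof (rule integrable_bounded_in_cball)
    show "norm x \<le> \<rho>" if "(u x)\<^sup>2 * (N * hardy_k a s d (norm x) + norm x * hardy_k' a s d (norm x)
           - weight_q N a (norm x) * (norm x)\<^sup>2 * (hardy_k a s d (norm x))\<^sup>2) \<noteq> 0" for x
      using that supp by auto
    fix x :: "real^'n"
    assume x: "norm x \<le> \<rho>"
    then have r: "0 \<le> norm x" "norm x < 1"
      using \<open>\<rho> < 1\<close> by auto
    have z: "\<bar>norm x * hardy_k' a s d (norm x)\<bar> \<le> K'"
      using K' x by (cases "x = 0") auto
    have "\<bar>N * hardy_k a s d (norm x) + norm x * hardy_k' a s d (norm x)
           - weight_q N a (norm x) * (norm x)\<^sup>2 * (hardy_k a s d (norm x))\<^sup>2\<bar> \<le> N * K + K' + K\<^sup>2"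
      by (rule hardy_bracket_bound[OF a s r N K[OF r(1) x] z])
    moreover have "(u x)\<^sup>2 \<le> Ub\<^sup>2"
      using Ub[OF x] power_mono[of "\<bar>u x\<bar>" Ub 2] by simp
    ultimately show "\<bar>(u x)\<^sup>2 * (N * hardy_k a s d (norm x) + norm x * hardy_k' a s d (norm x)
           - weight_q N a (norm x) * (norm x)\<^sup>2 * (hardy_k a s d (norm x))\<^sup>2)\<bar> \<le> Ub\<^sup>2 * (N * K + K' + K\<^sup>2)"
      unfolding abs_mult by (intro mult_mono) auto
  qed measurable
qed

text \<open>The inequality with the regularised weight \<open>k = g / (r\<^sup>4 + d)\<close>, \<open>d > 0\<close>: this produces the
  extra factor \<open>|x|\<^sup>4 / (|x|\<^sup>4 + d)\<close> on the left-hand side, which tends to \<open>1\<close> as \<open>d \<rightarrow> 0\<close>.\<close>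
lemma weighted_hardy_regularized:
  fixes u :: "real^'n \<Rightarrow> real" and a d :: real
  assumes n: "CARD('n) \<ge> 5" and u: "u \<in> C0_infty (ball 0 1)" and a: "0 \<le> a" "a < 1" and d: "d > 0"
  defines "N \<equiv> real CARD('n)"
  shows "ennreal (((N - 4) / 2)\<^sup>2) *
           (\<integral>\<^sup>+ x \<in> ball 0 1. ennreal ((u x)\<^sup>2 * ((norm x) ^ 4 / ((norm x) ^ 4 + d)
              / (weight_q N a (norm x) * weight_p N (norm x)))) \<partial>lborel)
         \<le> (\<integral>\<^sup>+ x \<in> ball 0 1. ennreal ((norm (grad u x))\<^sup>2 / weight_q N a (norm x)) \<partial>lborel)"
proof -
  define s where "s = N / 2 - 2"
  have s: "0 < s" "N = 2 * s + 4" "(N - 4) / 2 = s"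
    using n by (auto simp: s_def N_def)
  have sm: "smooth u"
    using u by (simp add: C0_infty_def)
  have [measurable]: "u \<in> borel_measurable borel"
    by (rule borel_measurable_continuous_onI[OF continuous_on_smooth[OF sm]])
  obtain \<rho> where \<rho>: "0 \<le> \<rho>" "\<rho> < 1" and supp: "\<And>x. u x \<noteq> 0 \<Longrightarrow> norm x \<le> \<rho>"
    using C0_infty_support_radius[OF u] by blast
  obtain K K' where K: "\<And>r. 0 \<le> r \<Longrightarrow> r \<le> \<rho> \<Longrightarrow> \<bar>hardy_k a s d r\<bar> \<le> K"
    and K': "\<And>r. 0 < r \<Longrightarrow> r \<le> \<rho> \<Longrightarrow> \<bar>r * hardy_k' a s d r\<bar> \<le> K'" "0 \<le> K'"
    using hardy_weight_bounds[OF a s(1) d \<rho>(2)] by blast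
  have [measurable]: "ball (0::real^'n) 1 \<in> sets borel"
    by simp
  have u_ball: "norm x < 1" if "u x \<noteq> 0" for x
    using supp[OF that] \<rho> by simp
  let ?k = "\<lambda>x. hardy_k a s d (norm x)" and ?k' = "\<lambda>x. hardy_k' a s d (norm x)"
    and ?q = "\<lambda>x. weight_q N a (norm x)"
  define w where "w x = (norm x) ^ 4 / ((norm x) ^ 4 + d) / (?q x * weight_p N (norm x))" for x :: "real^'n"
  text \<open>\<open>G = F + D\<close>, where \<open>D\<close> is the divergence of \<open>u\<^sup>2 k x\<close>, \<open>G\<close> bounds the left-hand
    integrand from above and \<open>F\<close> is bounded by the right-hand integrand.\<close>
  define D where "D x = (u x)\<^sup>2 * (N * ?k x + norm x * ?k' x) + 2 * ?k x * u x * (x \<bullet> grad u x)" for x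
  define G where "G x = (u x)\<^sup>2 * (N * ?k x + norm x * ?k' x - ?q x * (norm x)\<^sup>2 * (?k x)\<^sup>2)" for x
  define F where "F x = - 2 * (?k x * u x) * (x \<bullet> grad u x) - ?q x * (norm x)\<^sup>2 * (?k x * u x)\<^sup>2" for x
  have D: "integrable lborel D" "integral\<^sup>L lborel D = 0"
    using radial_divergence_identity[OF sm supp \<rho> hardy_k_measurable hardy_k_deriv[OF a s(1) d] K K']
    unfolding D_def N_def by simp_all
  have GFD: "G x = F x + D x" for x
    by (simp add: G_def F_def D_def algebra_simps power2_eq_square)
  have G_lower: "s\<^sup>2 * ((u x)\<^sup>2 * w x) \<le> G x \<and> 0 \<le> (u x)\<^sup>2 * w x" if "norm x < 1" for x
  proof -
    note pw = hardy_pointwise_inequality[OF a s(1) d norm_ge_zero that s(2)]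
    have "s\<^sup>2 * ((u x)\<^sup>2 * w x) = (u x)\<^sup>2 * (s\<^sup>2 * w x)"
      by (simp add: mult_ac)
    also have "\<dots> \<le> G x"
      unfolding G_def w_def using pw(2) by (intro mult_left_mono) auto
    finally have "s\<^sup>2 * ((u x)\<^sup>2 * w x) \<le> G x" .
    moreover have "0 \<le> w x"
      unfolding w_def by (rule pw(1))
    ultimately show ?thesis
      by simp
  qed
  have G_nonneg: "0 \<le> G x" for x
  proof (cases "u x = 0")
    case False
    then show ?thesis
      using G_lower[OF u_ball[OF False]] by (meson order_trans mult_nonneg_nonneg zero_le_power2)
  qed (simp add: G_def)
  have G_int: "integrable lborel G"
    unfolding G_def
    by (rule integrable_hardy_bracket[OF continuous_on_smooth[OF sm] supp \<rho>(2) a s(1) d s(2)])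
  have F_upper: "ennreal (F x) \<le> ennreal ((norm (grad u x))\<^sup>2 / ?q x) * indicator (ball 0 1) x" for x
  proof (cases "u x = 0 \<or> x = 0")
    case False
    have r: "0 < norm x" "norm x < 1"
      using False u_ball by auto
    have "0 < ?q x"
      using weights_pos(1)[OF a _ r] s by simp
    then have "F x \<le> (norm (grad u x))\<^sup>2 / ?q x"
      unfolding F_def by (rule completing_square_bound[OF _ norm_ge_zero Cauchy_Schwarz_ineq2])
    then show ?thesis
      using r by (simp add: ennreal_leI)
  qed (auto simp: F_def)
  have "ennreal (s\<^sup>2) * (\<integral>\<^sup>+ x \<in> ball 0 1. ennreal ((u x)\<^sup>2 * w x) \<partial>lborel)
      = (\<integral>\<^sup>+ x. ennreal (s\<^sup>2) * (ennreal ((u x)\<^sup>2 * w x) * indicator (ball 0 1) x) \<partial>lborel)"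
    by (rule nn_integral_cmult[symmetric]) (unfold w_def, measurable)
  also have "\<dots> \<le> (\<integral>\<^sup>+ x \<in> ball 0 1. ennreal ((norm (grad u x))\<^sup>2 / ?q x) \<partial>lborel)"
  proof (rule nn_integral_le_by_null_integral[OF D G_int G_nonneg GFD _ F_upper])
    show "ennreal (s\<^sup>2) * (ennreal ((u x)\<^sup>2 * w x) * indicator (ball 0 1) x) \<le> ennreal (G x)" for x
      using G_lower[of x] G_nonneg[of x]
      by (cases "x \<in> ball 0 1") (auto simp: ennreal_mult[symmetric] ennreal_leI)
  qed
  finally show ?thesis
    unfolding s(3) w_def by (simp add: mult.assoc)
qed

text \<open>The weighted Hardy inequality for every \<open>0 \<le> a < 1\<close>, by letting \<open>d \<rightarrow> 0\<close> with monotone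
  convergence.\<close>
lemma weighted_hardy:
  fixes u :: "real^'n \<Rightarrow> real" and a :: real
  assumes n: "CARD('n) \<ge> 5" and u: "u \<in> C0_infty (ball 0 1)" and a: "0 \<le> a" "a < 1"
  defines "N \<equiv> real CARD('n)"
  shows "ennreal (((N - 4) / 2)\<^sup>2) *
           (\<integral>\<^sup>+ x \<in> ball 0 1. ennreal ((u x)\<^sup>2 / (weight_q N a (norm x) * weight_p N (norm x))) \<partial>lborel)
         \<le> (\<integral>\<^sup>+ x \<in> ball 0 1. ennreal ((norm (grad u x))\<^sup>2 / weight_q N a (norm x)) \<partial>lborel)"
proof -
  define dd :: "nat \<Rightarrow> real" where "dd m = 1 / (real m + 1)" for m
  have dd: "0 < dd m" "dd (Suc m) \<le> dd m" for m
    by (auto simp: dd_def frac_le)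
  have dd_lim: "dd \<longlonglongrightarrow> 0"
    unfolding dd_def using LIMSEQ_inverse_real_of_nat_add[of 0] by (simp add: inverse_eq_divide add.commute)
  have [measurable]: "u \<in> borel_measurable borel"
    using u by (intro borel_measurable_continuous_onI continuous_on_smooth) (simp add: C0_infty_def)
  have [measurable]: "ball (0::real^'n) 1 \<in> sets borel"
    by simp
  let ?qp = "\<lambda>x. weight_q N a (norm x) * weight_p N (norm x)"
  define f where "f m x = ennreal ((u x)\<^sup>2 * ((norm x) ^ 4 / ((norm x) ^ 4 + dd m) / ?qp x))
      * indicator (ball 0 1) x" for m x
  have qp_pos: "0 < ?qp x" if "x \<noteq> 0" "norm x < 1" for x
    using weights_pos[OF a _ _ that(2)] n that(1) by (simp add: N_def)
  have qp: "0 \<le> ?qp x" if "norm x < 1" for x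
    using qp_pos[OF _ that] by (cases "x = 0") (auto simp: weight_q_def weight_p_def)
  show ?thesis
  proof (rule nn_integral_le_of_incseq)
    show "incseq f"
    proof (intro incseq_SucI le_funI)
      fix m and x :: "real^'n"
      have factor_mono: "(norm x) ^ 4 / ((norm x) ^ 4 + dd m) \<le> (norm x) ^ 4 / ((norm x) ^ 4 + dd (Suc m))"
        using dd[of m] dd[of "Suc m"] by (intro divide_left_mono mult_pos_pos add_nonneg_pos) auto
      show "f m x \<le> f (Suc m) x"
      proof (cases "x \<in> ball 0 1")
        case True
        have "(u x)\<^sup>2 * ((norm x) ^ 4 / ((norm x) ^ 4 + dd m) / ?qp x)
            \<le> (u x)\<^sup>2 * ((norm x) ^ 4 / ((norm x) ^ 4 + dd (Suc m)) / ?qp x)"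
          using qp[of x] True by (intro mult_left_mono divide_right_mono factor_mono) auto
        then show ?thesis
          unfolding f_def by (intro mult_right_mono ennreal_leI) auto
      qed (simp add: f_def)
    qed
    show "f m \<in> borel_measurable lborel" for m
      unfolding f_def by measurable
    show "(\<lambda>m. f m x) \<longlonglongrightarrow> ennreal ((u x)\<^sup>2 / ?qp x) * indicator (ball 0 1) x" for x
    proof (cases "x \<in> ball 0 1 \<and> x \<noteq> 0")
      case True
      then have "(\<lambda>m. (u x)\<^sup>2 * ((norm x) ^ 4 / ((norm x) ^ 4 + dd m) / ?qp x))
          \<longlonglongrightarrow> (u x)\<^sup>2 * ((norm x) ^ 4 / ((norm x) ^ 4 + 0) / ?qp x)"
        using qp_pos[of x] by (intro tendsto_intros dd_lim) auto
      then show ?thesis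
        using True by (simp add: f_def tendsto_ennrealI)
    qed (auto simp: f_def weight_q_def weight_p_def)
    show "ennreal (((N - 4) / 2)\<^sup>2) * integral\<^sup>N lborel (f m)
        \<le> (\<integral>\<^sup>+ x \<in> ball 0 1. ennreal ((norm (grad u x))\<^sup>2 / weight_q N a (norm x)) \<partial>lborel)" for m
      using weighted_hardy_regularized[OF n u a dd(1)[of m]] unfolding f_def N_def .
  qed
qed

theorem mainTheorem3:
  fixes u :: "real^'n \<Rightarrow> real"
  assumes N: "CARD('n) \<ge> 5"
    and u: "u \<in> C0_infty (ball 0 1)"
  defines "N \<equiv> real CARD('n)"
  shows "((\<integral>\<^sup>+ x \<in> ball 0 1. ennreal ((norm (grad u x))\<^sup>2 /
              ((norm x)\<^sup>2 - 9/10 * norm x powr (N/2 + 1))) \<partial>lborel)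
         \<ge> ennreal (((N - 4)/2)\<^sup>2) *
           (\<integral>\<^sup>+ x \<in> ball 0 1. ennreal ((u x)\<^sup>2 /
              (((norm x)\<^sup>2 - 9/10 * norm x powr (N/2 + 1)) * ((norm x)\<^sup>2 - norm x powr (N/2))))
            \<partial>lborel)) \<and>
         ((\<integral>\<^sup>+ x \<in> ball 0 1. ennreal ((norm (grad u x))\<^sup>2 / (norm x)\<^sup>2) \<partial>lborel)
         \<ge> ennreal (((N - 4)/2)\<^sup>2) *
           (\<integral>\<^sup>+ x \<in> ball 0 1. ennreal ((u x)\<^sup>2 /
              ((norm x)\<^sup>2 * ((norm x)\<^sup>2 - norm x powr (N/2)))) \<partial>lborel))"
  using weighted_hardy[OF N u, of "9/10"] weighted_hardy[OF N u, of 0]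
  unfolding N_def weight_q_def weight_p_def by simp

end
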